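(* Let $K_{m_1,m_2}$ be the complete bipartite graph with bipartition $(X,Y)$, $X=\{x_1,\dots,x_{m_1}\}$, $Y=\{y_1,\dots,y_{m_2}\}$, where $2\le m_1\le m_2$. Let $s$ and $i$ be integers with $\max\{1,s-m_2\}\le i\le \min\{m_1,s-1\}$ and $s\ge m_2-m_1+3$, and let $S_i=\{x_1,\dots,x_i,y_1,\dots,y_{s-i}\}$. If $2i> m_1+s-m_2$, then $$\kappa^*_{K_{m_1,m_2}}(S_i)\ge\begin{cases} m_1-i+\left\lfloor\frac{i}{2}\right\rfloor, & \text{if } m_1+s-m_2<2i\le \frac{4(m_1+s-m_2)}{3},\\[2pt] m_2-s+i, & \text{if } \frac{4(m_1+s-m_2)}{3}<2i\le 2(m_1+s-m_2),\\[2pt] m_1, & \text{if } 2i>2(m_1+s-m_2).\end{cases}$$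
   Context: For $S\subseteq V(G)$ with $|S|\ge 2$, an $S$-Steiner tree of $G$ is a subtree $T$ of $G$ with $S\subseteq V(T)$ all of whose leaves belong to $S$. A family of $S$-Steiner trees $T_1,\dots,T_k$ is completely independent if for all $1\le p<q\le k$: $E(T_p)\cap E(T_q)=\emptyset$, $V(T_p)\cap V(T_q)=S$, and for any two vertices $x_1,x_2\in S$ the $(x_1,x_2)$-paths in $T_p$ and in $T_q$ are internally disjoint. $\kappa^*_G(S)$ is the maximum number of trees in a completely independent family of $S$-Steiner trees in $G$. *)

theory Defs
  imports Main
begin

type_synonym 'a graph = "'a set \<times> 'a set set"

definition verts :: "'a graph \<Rightarrow> 'a set" where "verts G = fst G"
definition edges :: "'a graph \<Rightarrow> 'a set set" where "edges G = snd G"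

definition is_graph :: "'a graph \<Rightarrow> bool" where
  "is_graph G \<longleftrightarrow> finite (verts G) \<and>
     (\<forall>e\<in>edges G. \<exists>u v. e = {u, v} \<and> u \<noteq> v \<and> u \<in> verts G \<and> v \<in> verts G)"

definition subgraph :: "'a graph \<Rightarrow> 'a graph \<Rightarrow> bool" where
  "subgraph T G \<longleftrightarrow> is_graph T \<and> verts T \<subseteq> verts G \<and> edges T \<subseteq> edges G"

definition is_path :: "'a graph \<Rightarrow> 'a \<Rightarrow> 'a \<Rightarrow> 'a list \<Rightarrow> bool" where
  "is_path H x y P \<longleftrightarrow> P \<noteq> [] \<and> hd P = x \<and> last P = y \<and> distinct P \<and>
     set P \<subseteq> verts H \<and> (\<forall>j. Suc j < length P \<longrightarrow> {P ! j, P ! Suc j} \<in> edges H)"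

definition internal :: "'a list \<Rightarrow> 'a set" where
  "internal P = set (butlast (tl P))"

definition connected_graph :: "'a graph \<Rightarrow> bool" where
  "connected_graph H \<longleftrightarrow> (\<forall>x\<in>verts H. \<forall>y\<in>verts H. \<exists>P. is_path H x y P)"

definition is_cycle :: "'a graph \<Rightarrow> 'a list \<Rightarrow> bool" where
  "is_cycle H C \<longleftrightarrow> length C \<ge> 3 \<and> is_path H (hd C) (last C) C \<and> {last C, hd C} \<in> edges H"

definition is_tree :: "'a graph \<Rightarrow> bool" where
  "is_tree H \<longleftrightarrow> is_graph H \<and> verts H \<noteq> {} \<and> connected_graph H \<and> (\<nexists>C. is_cycle H C)"

definition degree :: "'a graph \<Rightarrow> 'a \<Rightarrow> nat" where
  "degree H v = card {e \<in> edges H. v \<in> e}"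

definition leaves :: "'a graph \<Rightarrow> 'a set" where
  "leaves H = {v \<in> verts H. degree H v = 1}"

definition steiner_tree :: "'a graph \<Rightarrow> 'a set \<Rightarrow> 'a graph \<Rightarrow> bool" where
  "steiner_tree G S T \<longleftrightarrow> subgraph T G \<and> is_tree T \<and> S \<subseteq> verts T \<and> leaves T \<subseteq> S"

definition compl_indep_family :: "'a graph \<Rightarrow> 'a set \<Rightarrow> nat \<Rightarrow> (nat \<Rightarrow> 'a graph) \<Rightarrow> bool" where
  "compl_indep_family G S k T \<longleftrightarrow>
     (\<forall>p<k. steiner_tree G S (T p)) \<and>
     (\<forall>p q. p < q \<and> q < k \<longrightarrow>
        edges (T p) \<inter> edges (T q) = {} \<and>
        verts (T p) \<inter> verts (T q) = S \<and>
        (\<forall>x1\<in>S. \<forall>x2\<in>S. \<forall>P Q. is_path (T p) x1 x2 P \<and> is_path (T q) x1 x2 Q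
            \<longrightarrow> internal P \<inter> internal Q = {}))"

definition kappa_star :: "'a graph \<Rightarrow> 'a set \<Rightarrow> nat" where
  "kappa_star G S = Sup {k. \<exists>T. compl_indep_family G S k T}"

text \<open>Complete bipartite graph K_{m1,m2} with X = {Inl 1..Inl m1}, Y = {Inr 1..Inr m2}.\<close>
definition complete_bipartite :: "nat \<Rightarrow> nat \<Rightarrow> (nat + nat) graph" where
  "complete_bipartite m1 m2 =
     (Inl ` {1..m1} \<union> Inr ` {1..m2},
      {{Inl a, Inr b} | a b. a \<in> {1..m1} \<and> b \<in> {1..m2}})"

definition S_set :: "nat \<Rightarrow> nat \<Rightarrow> (nat + nat) set" where
  "S_set s i = Inl ` {1..i} \<union> Inr ` {1..s - i}"

end

theory Submission
  imports Defs
begin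

text \<open>Every internal vertex of a path has two distinct neighbours on it. Hence S-Steiner trees with
  pairwise disjoint edge sets are completely independent as soon as their inner vertices (those with
  two distinct neighbours) lie in pairwise disjoint sets \<open>C p\<close> with \<open>V(T p) = S \<union> C p\<close>.
  All trees below are grown from one vertex by attaching stars of fresh leaves, which keeps them
  trees and confines their inner vertices to the star centres.

  Let \<open>b = s - i\<close> be the number of terminals in Y. The double stars with centres \<open>Inl (m1 - k)\<close>
  and \<open>Inr (b + 1 + k)\<close>, \<open>k < min m1 (m2 - b)\<close>, give \<open>min m1 (m2 - s + i)\<close> trees, the bound
  of the second and third case. For the first case keep the \<open>m1 - i\<close> double stars whose X-centre
  is not a terminal, and add for each of the \<open>\<lfloor>i/2\<rfloor>\<close> pairs of X-terminals a tree whose inner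
  vertices are the pair and two further vertices of Y; the condition \<open>2i \<ge> m1 + s - m2\<close> leaves
  room in Y for the double stars, and \<open>m1 \<le> m2\<close> for the pair trees.\<close>

section \<open>Inner vertices and trees grown from stars\<close>

lemma verts_pair [simp]: "verts (V, E) = V"
  by (simp add: verts_def)

lemma edges_pair [simp]: "edges (V, E) = E"
  by (simp add: edges_def)

definition inner_vertex :: "'a graph \<Rightarrow> 'a \<Rightarrow> bool" where
  "inner_vertex H v \<longleftrightarrow> (\<exists>a b. a \<noteq> b \<and> {v, a} \<in> edges H \<and> {v, b} \<in> edges H)"

lemma inner_vertexI: "a \<noteq> b \<Longrightarrow> {v, a} \<in> edges H \<Longrightarrow> {v, b} \<in> edges H \<Longrightarrow> inner_vertex H v"
  unfolding inner_vertex_def by blast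

lemma is_graph_edge_verts:
  assumes "is_graph G" "e \<in> edges G" "v \<in> e"
  shows "v \<in> verts G"
proof -
  obtain u w where "e = {u, w}" "u \<in> verts G" "w \<in> verts G"
    using assms(1,2) unfolding is_graph_def by meson
  then show ?thesis
    using assms(3) by auto
qed

lemma is_graph_finite_edges:
  assumes "is_graph G"
  shows "finite (edges G)"
proof -
  have "edges G \<subseteq> Pow (verts G)"
    using is_graph_edge_verts[OF assms] by blast
  moreover have "finite (verts G)"
    using assms unfolding is_graph_def by blast
  ultimately show ?thesis
    by (meson finite_Pow_iff finite_subset)
qed

lemma degree_inner_vertex:
  assumes "is_graph G" "inner_vertex G v"
  shows "degree G v \<noteq> 1"
proof -
  obtain a b where ab: "a \<noteq> b" "{v, a} \<in> edges G" "{v, b} \<in> edges G"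
    using assms(2) unfolding inner_vertex_def by blast
  have "{{v, a}, {v, b}} \<subseteq> {e \<in> edges G. v \<in> e}"
    using ab by auto
  then have "card {{v, a}, {v, b}} \<le> degree G v"
    unfolding degree_def by (rule card_mono[rotated]) (simp add: is_graph_finite_edges[OF assms(1)])
  then show ?thesis
    using ab(1) by (auto simp: doubleton_eq_iff)
qed

lemma is_path_mono:
  assumes "is_path H x y P" "verts H \<subseteq> verts H'" "edges H \<subseteq> edges H'"
  shows "is_path H' x y P"
  using assms unfolding is_path_def by blast

lemma is_path_rev:
  assumes "is_path H x y P"
  shows "is_path H y x (rev P)"
proof -
  have "{rev P ! j, rev P ! Suc j} \<in> edges H" if j: "Suc j < length P" for j
  proof -
    define k where "k = length P - Suc (Suc j)"
    have "Suc k < length P" "rev P ! j = P ! Suc k" "rev P ! Suc j = P ! k"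
      using j by (simp_all add: rev_nth k_def Suc_diff_Suc)
    then show ?thesis
      using assms unfolding is_path_def by (metis insert_commute)
  qed
  then show ?thesis
    using assms unfolding is_path_def by (auto simp: hd_rev last_rev)
qed

lemma inner_vertex_internal:
  assumes "is_path H x y P" "v \<in> internal P"
  shows "inner_vertex H v"
proof -
  obtain j where j: "Suc (Suc j) < length P" "v = P ! Suc j"
    using assms(2) unfolding internal_def
    by (force simp: in_set_conv_nth nth_butlast nth_tl)
  have "P ! j \<noteq> P ! Suc (Suc j)"
    using assms(1) j(1) unfolding is_path_def by (simp add: nth_eq_iff_index_eq)
  moreover have "{P ! j, v} \<in> edges H" "{v, P ! Suc (Suc j)} \<in> edges H"
    using assms(1) j unfolding is_path_def by auto
  ultimately show ?thesis
    by (metis inner_vertexI insert_commute)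
qed

lemma inner_vertex_cycle:
  assumes "is_cycle H C" "v \<in> set C"
  shows "inner_vertex H v"
proof -
  have len: "length C \<ge> 3" and path: "is_path H (hd C) (last C) C"
    and closing: "{last C, hd C} \<in> edges H"
    using assms(1) unfolding is_cycle_def by auto
  have step: "{C ! j, C ! Suc j} \<in> edges H" if "Suc j < length C" for j
    using path that unfolding is_path_def by blast
  have neq: "C ! a \<noteq> C ! b" if "a < length C" "b < length C" "a \<noteq> b" for a b
    using path that unfolding is_path_def by (simp add: nth_eq_iff_index_eq)
  have nonempty: "C \<noteq> []"
    using len by auto
  then have hd: "hd C = C ! 0" and last: "last C = C ! (length C - 1)"
    by (simp_all add: hd_conv_nth last_conv_nth)
  obtain j where j: "j < length C" "v = C ! j"
    using assms(2) by (auto simp: in_set_conv_nth)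
  consider "j = 0" | k where "j = Suc k" "Suc j < length C" | k where "j = Suc k" "Suc j = length C"
    using j(1) by (metis Suc_lessI not0_implies_Suc)
  then show ?thesis
  proof cases
    case 1
    then show ?thesis
      using step[of 0] closing neq[of 1 "length C - 1"] len j hd last
      by (intro inner_vertexI[of "C ! 1" "C ! (length C - 1)"]) (auto simp: insert_commute)
  next
    case (2 k)
    then show ?thesis
      using step[of k] step[of j] neq[of k "Suc j"] j
      by (intro inner_vertexI[of "C ! k" "C ! Suc j"]) (auto simp: insert_commute)
  next
    case (3 k)
    then have "k < length C" "k \<noteq> 0"
      using len by auto
    then have "C ! k \<noteq> C ! 0"
      using neq[of k 0] nonempty by simp
    moreover have "v = last C"
      using j(2) 3(2) last by (metis diff_Suc_1)
    moreover have "{C ! k, v} \<in> edges H"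
      using step[of k] 3 j by simp
    moreover have "{v, C ! 0} \<in> edges H"
      using closing hd \<open>v = last C\<close> by simp
    ultimately show ?thesis
      by (metis inner_vertexI insert_commute)
  qed
qed

lemma is_tree_singleton: "is_tree ({r}, {})"
  unfolding is_tree_def is_graph_def connected_graph_def is_cycle_def is_path_def
  by (auto intro!: exI[of _ "[r]"])

definition add_star :: "'a graph \<Rightarrow> 'a \<Rightarrow> 'a set \<Rightarrow> 'a graph" where
  "add_star G c L = (verts G \<union> L, edges G \<union> (\<lambda>l. {c, l}) ` L)"

lemma verts_add_star [simp]: "verts (add_star G c L) = verts G \<union> L"
  by (simp add: add_star_def)

lemma edges_add_star [simp]: "edges (add_star G c L) = edges G \<union> (\<lambda>l. {c, l}) ` L"
  by (simp add: add_star_def)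

lemma connected_add_leaf:
  assumes T: "connected_graph T" and c: "c \<in> verts T" and l: "l \<notin> verts T"
  shows "connected_graph (add_star T c {l})"
proof -
  let ?T = "add_star T c {l}"
  have old: "\<exists>P. is_path T x y P" if "x \<in> verts T" "y \<in> verts T" for x y
    using T that unfolding connected_graph_def by blast
  have lift: "is_path ?T x y P" if "is_path T x y P" for x y P
    using that by (rule is_path_mono) auto
  have from_leaf: "\<exists>P. is_path ?T l y P" if y: "y \<in> verts ?T" for y
  proof (cases "y = l")
    case True
    then show ?thesis
      unfolding is_path_def by (auto intro!: exI[of _ "[l]"])
  next
    case False
    then obtain Q where Q: "is_path T c y Q"
      using old c y by auto
    then have "l \<notin> set Q"
      using l unfolding is_path_def by auto
    moreover have "{(l # Q) ! j, (l # Q) ! Suc j} \<in> edges ?T" if "Suc j < length (l # Q)" for j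
      using that lift[OF Q] unfolding is_path_def by (cases j) (auto simp: hd_conv_nth insert_commute)
    ultimately have "is_path ?T l y (l # Q)"
      using lift[OF Q] unfolding is_path_def by auto
    then show ?thesis ..
  qed
  show ?thesis
    unfolding connected_graph_def
  proof (intro ballI)
    fix x y assume x: "x \<in> verts ?T" and y: "y \<in> verts ?T"
    consider "x = l" | "y = l" | "x \<in> verts T" "y \<in> verts T"
      using x y by auto
    then show "\<exists>P. is_path ?T x y P"
    proof cases
      case 1
      then show ?thesis
        using from_leaf[OF y] by simp
    next
      case 2
      obtain P where "is_path ?T l x P"
        using from_leaf[OF x] ..
      then have "is_path ?T x l (rev P)"
        by (rule is_path_rev)
      then show ?thesis
        using 2 by blast
    next
      case 3
      then show ?thesis
        using old lift by blast
    qed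
  qed
qed

lemma acyclic_add_leaf:
  assumes g: "is_graph T" and T: "\<nexists>C. is_cycle T C" and l: "l \<notin> verts T"
  shows "\<nexists>C. is_cycle (add_star T c {l}) C"
proof
  assume "\<exists>C. is_cycle (add_star T c {l}) C"
  then obtain C where C: "is_cycle (add_star T c {l}) C" ..
  have l_edges: "l \<notin> e" if "e \<in> edges T" for e
    using is_graph_edge_verts[OF g that] l by blast
  have "\<not> inner_vertex (add_star T c {l}) l"
    unfolding inner_vertex_def using l_edges by (auto simp: doubleton_eq_iff)
  then have "l \<notin> set C"
    using inner_vertex_cycle[OF C] by blast
  moreover have "hd C \<in> set C" "last C \<in> set C"
    using C unfolding is_cycle_def is_path_def by auto
  ultimately have "is_cycle T C"
    using C unfolding is_cycle_def is_path_def by (auto simp: doubleton_eq_iff)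
  then show False
    using T by blast
qed

lemma is_tree_add_leaf:
  assumes T: "is_tree T" and c: "c \<in> verts T" and l: "l \<notin> verts T"
  shows "is_tree (add_star T c {l})"
proof -
  have "is_graph T"
    using T unfolding is_tree_def by blast
  then have "is_graph (add_star T c {l})"
    using c l unfolding is_graph_def by auto metis
  then show ?thesis
    using T connected_add_leaf[OF _ c l] acyclic_add_leaf[OF _ _ l]
    unfolding is_tree_def by auto
qed

lemma is_tree_add_star:
  assumes "finite L" "is_tree T" "c \<in> verts T" "L \<inter> verts T = {}"
  shows "is_tree (add_star T c L)"
  using assms
proof (induction L rule: finite_induct)
  case empty
  then show ?case
    by (simp add: add_star_def verts_def edges_def)
next
  case (insert l L)
  have "add_star T c (insert l L) = add_star (add_star T c L) c {l}"
    by (auto simp: add_star_def)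
  moreover have "is_tree (add_star T c L)"
    using insert by auto
  ultimately show ?case
    using insert is_tree_add_leaf[of "add_star T c L" c l] by auto
qed

lemma inner_vertex_add_star:
  assumes g: "is_graph T" and L: "L \<inter> verts T = {}" and v: "inner_vertex (add_star T c L) v"
  shows "inner_vertex T v \<or> v = c"
proof (rule ccontr)
  assume nv: "\<not> (inner_vertex T v \<or> v = c)"
  obtain a b where ab: "a \<noteq> b" "{v, a} \<in> edges (add_star T c L)" "{v, b} \<in> edges (add_star T c L)"
    using v unfolding inner_vertex_def by blast
  have new: "v \<in> L \<and> x = c" if "{v, x} \<in> (\<lambda>l. {c, l}) ` L" for x
    using that nv by (auto simp: doubleton_eq_iff)
  have old: "v \<in> verts T" if "{v, x} \<in> edges T" for x
    using is_graph_edge_verts[OF g that] by simp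
  show False
  proof (cases "{v, a} \<in> edges T")
    case True
    then have "{v, b} \<in> edges T"
      using ab(3) new[of b] old L by auto
    then show False
      using True ab(1) nv inner_vertexI by metis
  next
    case False
    then have "v \<in> L" "a = c"
      using ab(2) new[of a] by auto
    moreover have "b = c"
      using ab(3) new[of b] old[of b] \<open>v \<in> L\<close> L by auto
    ultimately show False
      using ab(1) by simp
  qed
qed

fun add_stars :: "'a graph \<Rightarrow> ('a \<times> 'a set) list \<Rightarrow> 'a graph" where
  "add_stars G [] = G"
| "add_stars G ((c, L) # cs) = add_stars (add_star G c L) cs"

fun fresh_stars :: "'a graph \<Rightarrow> ('a \<times> 'a set) list \<Rightarrow> bool" where
  "fresh_stars G [] = True"
| "fresh_stars G ((c, L) # cs) \<longleftrightarrow>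
     c \<in> verts G \<and> finite L \<and> L \<inter> verts G = {} \<and> fresh_stars (add_star G c L) cs"

lemma verts_add_stars: "verts (add_stars G cs) = verts G \<union> \<Union> (snd ` set cs)"
  by (induction G cs rule: add_stars.induct) auto

lemma edges_add_stars: "edges (add_stars G cs) = edges G \<union> (\<Union>(c, L) \<in> set cs. (\<lambda>l. {c, l}) ` L)"
  by (induction G cs rule: add_stars.induct) auto

lemma is_tree_add_stars: "is_tree G \<Longrightarrow> fresh_stars G cs \<Longrightarrow> is_tree (add_stars G cs)"
  by (induction G cs rule: add_stars.induct) (auto simp: is_tree_add_star)

lemma inner_vertex_add_stars:
  "is_tree G \<Longrightarrow> fresh_stars G cs \<Longrightarrow> inner_vertex (add_stars G cs) v \<Longrightarrow>
     inner_vertex G v \<or> v \<in> fst ` set cs"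
proof (induction G cs rule: add_stars.induct)
  case (2 G c L cs)
  then have "inner_vertex (add_star G c L) v \<or> v \<in> fst ` set cs"
    by (auto simp: is_tree_add_star)
  then show ?case
    using 2 inner_vertex_add_star[of G L c v] unfolding is_tree_def by auto
qed simp

definition star_tree :: "'a \<Rightarrow> ('a \<times> 'a set) list \<Rightarrow> 'a graph" where
  "star_tree r cs = add_stars ({r}, {}) cs"

lemma is_tree_star_tree: "fresh_stars ({r}, {}) cs \<Longrightarrow> is_tree (star_tree r cs)"
  unfolding star_tree_def by (rule is_tree_add_stars[OF is_tree_singleton])

lemma inner_vertex_star_tree:
  assumes "fresh_stars ({r}, {}) cs" "inner_vertex (star_tree r cs) v"
  shows "v \<in> fst ` set cs"
  using inner_vertex_add_stars[OF is_tree_singleton assms[unfolded star_tree_def]]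
  by (simp add: inner_vertex_def)

section \<open>Completely independent families\<close>

lemma steiner_treeI:
  assumes "is_tree T" "verts T \<subseteq> verts G" "edges T \<subseteq> edges G" "S \<subseteq> verts T"
    and "\<And>v. v \<in> verts T \<Longrightarrow> v \<notin> S \<Longrightarrow> inner_vertex T v"
  shows "steiner_tree G S T"
proof -
  have "is_graph T"
    using assms(1) unfolding is_tree_def by blast
  have "v \<in> S" if "v \<in> leaves T" for v
    using that assms(5) degree_inner_vertex[OF \<open>is_graph T\<close>] unfolding leaves_def by auto
  then have "leaves T \<subseteq> S"
    by blast
  then show ?thesis
    using assms(1-4) \<open>is_graph T\<close> unfolding steiner_tree_def subgraph_def by simp
qed

lemma compl_indep_familyI:
  assumes steiner: "\<And>p. p < k \<Longrightarrow> steiner_tree G S (T p)"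
    and edges: "\<And>p q. p < q \<Longrightarrow> q < k \<Longrightarrow> edges (T p) \<inter> edges (T q) = {}"
    and verts: "\<And>p. p < k \<Longrightarrow> verts (T p) = S \<union> C p"
    and inner: "\<And>p v. p < k \<Longrightarrow> inner_vertex (T p) v \<Longrightarrow> v \<in> C p"
    and disjoint: "\<And>p q. p < q \<Longrightarrow> q < k \<Longrightarrow> C p \<inter> C q = {}"
  shows "compl_indep_family G S k T"
  unfolding compl_indep_family_def
proof (intro conjI allI impI ballI)
  fix p q assume pq: "p < q \<and> q < k"
  then show "edges (T p) \<inter> edges (T q) = {}"
    using edges by blast
  show "verts (T p) \<inter> verts (T q) = S"
    using verts[of p] verts[of q] disjoint[of p q] pq by auto
  fix x y P Q assume "is_path (T p) x y P \<and> is_path (T q) x y Q"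
  then have "internal P \<subseteq> C p" "internal Q \<subseteq> C q"
    using inner_vertex_internal inner[of p] inner[of q] pq by (meson less_trans subsetI)+
  then show "internal P \<inter> internal Q = {}"
    using disjoint[of p q] pq by blast
qed (use steiner in blast)

lemma steiner_tree_has_edge:
  assumes "steiner_tree G S T" "x \<in> S" "y \<in> S" "x \<noteq> y"
  shows "edges T \<noteq> {}"
proof -
  have "connected_graph T" "x \<in> verts T" "y \<in> verts T"
    using assms(1-3) unfolding steiner_tree_def is_tree_def by auto
  then obtain P where P: "is_path T x y P"
    unfolding connected_graph_def by blast
  then have "Suc 0 < length P"
    using assms(4) unfolding is_path_def by (cases P) auto
  then have "{P ! 0, P ! Suc 0} \<in> edges T"
    using P unfolding is_path_def by blast
  then show ?thesis
    by blast
qed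

text \<open>Choosing one edge of each tree shows that a family has at most \<open>card (edges G)\<close> members,
  so the set whose supremum defines \<open>kappa_star\<close> is bounded.\<close>
lemma kappa_star_ge:
  assumes family: "compl_indep_family G S k T" and "finite (edges G)"
    and "x \<in> S" "y \<in> S" "x \<noteq> y"
  shows "k \<le> kappa_star G S"
proof -
  have "k' \<le> card (edges G)" if "compl_indep_family G S k' T'" for k' T'
  proof -
    have tree: "steiner_tree G S (T' p)" if "p < k'" for p
      using \<open>compl_indep_family G S k' T'\<close> that unfolding compl_indep_family_def by blast
    define e where "e p = (SOME e. e \<in> edges (T' p))" for p
    have e: "e p \<in> edges (T' p)" if "p < k'" for p
      using steiner_tree_has_edge[OF tree[OF that] assms(3-5)] unfolding e_def by (simp add: some_in_eq)
    have "edges (T' p) \<inter> edges (T' q) = {}" if "p < k'" "q < k'" "p \<noteq> q" for p q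
      using \<open>compl_indep_family G S k' T'\<close> that unfolding compl_indep_family_def
      by (metis Int_commute linorder_neqE_nat)
    then have "inj_on e {..<k'}"
      using e by (intro inj_onI) (metis IntI empty_iff lessThan_iff)
    moreover have "e ` {..<k'} \<subseteq> edges G"
      using e tree unfolding steiner_tree_def subgraph_def by blast
    ultimately show ?thesis
      using card_inj_on_le[of e "{..<k'}" "edges G"] assms(2) by simp
  qed
  then have "bdd_above {k. \<exists>T. compl_indep_family G S k T}"
    by (intro bdd_aboveI[where M = "card (edges G)"]) blast
  then show ?thesis
    unfolding kappa_star_def using family by (auto intro: cSup_upper)
qed

section \<open>Double stars in the complete bipartite graph\<close>

definition bip_edge :: "nat \<times> nat \<Rightarrow> (nat + nat) set" where
  "bip_edge = (\<lambda>(a, c). {Inl a, Inr c})"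

lemma bip_edge_apply [simp]: "bip_edge (a, c) = {Inl a, Inr c}"
  by (simp add: bip_edge_def)

lemma bip_edge_image_Int: "bip_edge ` P \<inter> bip_edge ` Q = bip_edge ` (P \<inter> Q)"
proof -
  have "inj bip_edge"
    by (rule injI) (auto simp: bip_edge_def doubleton_eq_iff)
  then show ?thesis
    by (simp add: image_Int)
qed

lemma verts_complete_bipartite: "verts (complete_bipartite m1 m2) = Inl ` {1..m1} \<union> Inr ` {1..m2}"
  by (simp add: complete_bipartite_def)

lemma edges_complete_bipartite: "edges (complete_bipartite m1 m2) = bip_edge ` ({1..m1} \<times> {1..m2})"
  unfolding complete_bipartite_def by force

lemma star_Inl: "(\<lambda>l. {Inl a, l}) ` Inr ` A = bip_edge ` ({a} \<times> A)"
  by (auto simp: image_iff)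

lemma star_Inr: "(\<lambda>l. {Inr c, l}) ` Inl ` A = bip_edge ` (A \<times> {c})"
  by (auto simp: image_iff insert_commute)

lemma inner_vertex_Inl:
  assumes "edges T = bip_edge ` P" "(a, c) \<in> P" "(a, c') \<in> P" "c \<noteq> c'"
  shows "inner_vertex T (Inl a)"
proof (rule inner_vertexI)
  show "{Inl a, Inr c} \<in> edges T" "{Inl a, Inr c'} \<in> edges T"
    using assms(1-3) by (metis bip_edge_apply image_eqI)+
qed (use assms(4) in simp)

lemma inner_vertex_Inr:
  assumes "edges T = bip_edge ` P" "(a, c) \<in> P" "(a', c) \<in> P" "a \<noteq> a'"
  shows "inner_vertex T (Inr c)"
proof (rule inner_vertexI)
  show "{Inr c, Inl a} \<in> edges T" "{Inr c, Inl a'} \<in> edges T"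
    using assms(1-3) by (metis bip_edge_apply image_eqI insert_commute)+
qed (use assms(4) in simp)

locale bipartite_terminals =
  fixes m1 m2 i b :: nat
  assumes two_le_i: "2 \<le> i" and i_le_m1: "i \<le> m1" and b_pos: "1 \<le> b" and b_le_m2: "b \<le> m2"
begin

abbreviation G :: "(nat + nat) graph" where
  "G \<equiv> complete_bipartite m1 m2"

abbreviation S :: "(nat + nat) set" where
  "S \<equiv> Inl ` {1..i} \<union> Inr ` {1..b}"

lemma kappa_star_ge_family: "compl_indep_family G S k T \<Longrightarrow> k \<le> kappa_star G S"
  by (rule kappa_star_ge[of _ _ _ _ "Inl 1" "Inr 1"])
    (use two_le_i b_pos in \<open>auto simp: edges_complete_bipartite\<close>)

definition double_star :: "nat \<Rightarrow> (nat + nat) graph" where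
  "double_star k = star_tree (Inl (m1 - k))
     [(Inl (m1 - k), Inr ` insert (b + 1 + k) {1..b}),
      (Inr (b + 1 + k), Inl ` ({1..i} - {m1 - k}))]"

definition double_star_edges :: "nat \<Rightarrow> (nat \<times> nat) set" where
  "double_star_edges k = {m1 - k} \<times> insert (b + 1 + k) {1..b} \<union> ({1..i} - {m1 - k}) \<times> {b + 1 + k}"

definition double_star_hubs :: "nat \<Rightarrow> (nat + nat) set" where
  "double_star_hubs k = {Inl (m1 - k), Inr (b + 1 + k)}"

lemma edges_double_star: "edges (double_star k) = bip_edge ` double_star_edges k"
  unfolding double_star_def star_tree_def edges_add_stars double_star_edges_def
  by (simp add: star_Inl star_Inr image_Un)

lemma verts_double_star: "verts (double_star k) = S \<union> double_star_hubs k"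
  unfolding double_star_def double_star_hubs_def star_tree_def verts_add_stars by auto

lemma is_tree_double_star: "is_tree (double_star k)"
  unfolding double_star_def by (rule is_tree_star_tree) auto

lemma inner_vertex_double_star: "inner_vertex (double_star k) v \<Longrightarrow> v \<in> double_star_hubs k"
  unfolding double_star_def double_star_hubs_def by (drule inner_vertex_star_tree[rotated]) auto

lemma steiner_tree_double_star:
  assumes "k < m1" "b + k < m2"
  shows "steiner_tree G S (double_star k)"
proof (rule steiner_treeI)
  show "verts (double_star k) \<subseteq> verts G"
    using assms i_le_m1 b_le_m2
    unfolding verts_double_star double_star_hubs_def verts_complete_bipartite by auto
  show "edges (double_star k) \<subseteq> edges G"
    using assms i_le_m1 b_le_m2
    unfolding edges_double_star edges_complete_bipartite double_star_edges_def by (intro image_mono) auto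
  fix v assume "v \<in> verts (double_star k)" "v \<notin> S"
  then consider "v = Inl (m1 - k)" | "v = Inr (b + 1 + k)"
    unfolding verts_double_star double_star_hubs_def by blast
  then show "inner_vertex (double_star k) v"
  proof cases
    case 1
    show ?thesis
      unfolding 1 using b_pos by (intro inner_vertex_Inl[OF edges_double_star, where c = 1 and c' = "b + 1 + k"])
        (auto simp: double_star_edges_def)
  next
    case 2
    define a where "a = (if m1 - k = 1 then 2 else 1 :: nat)"
    show ?thesis
      unfolding 2 using two_le_i
      by (intro inner_vertex_Inr[OF edges_double_star, where a = "m1 - k" and a' = a])
        (auto simp: double_star_edges_def a_def)
  qed
qed (auto simp: is_tree_double_star verts_double_star double_star_hubs_def)

lemma double_star_edges_disjoint:
  assumes "p < q" "q < m1"
  shows "double_star_edges p \<inter> double_star_edges q = {}"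
  using assms unfolding double_star_edges_def by auto

lemma compl_indep_family_double_stars:
  assumes "K \<le> m1" "b + K \<le> m2"
  shows "compl_indep_family G S K double_star"
proof (rule compl_indep_familyI[where C = double_star_hubs])
  fix p assume "p < K"
  then show "steiner_tree G S (double_star p)"
    using assms by (intro steiner_tree_double_star) auto
next
  fix p q assume "p < q" "q < K"
  then show "double_star_hubs p \<inter> double_star_hubs q = {}"
    using assms unfolding double_star_hubs_def by auto
  show "edges (double_star p) \<inter> edges (double_star q) = {}"
    using \<open>p < q\<close> \<open>q < K\<close> assms double_star_edges_disjoint[of p q]
    by (simp add: edges_double_star bip_edge_image_Int)
qed (simp_all add: verts_double_star inner_vertex_double_star)

lemma kappa_star_ge_double_stars: "min m1 (m2 - b) \<le> kappa_star G S"
  using b_le_m2 by (intro kappa_star_ge_family[OF compl_indep_family_double_stars]) auto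

end

section \<open>Trees for pairs of terminals\<close>

locale bipartite_terminals_pairs = bipartite_terminals +
  assumes m1_le_m2: "m1 \<le> m2" and spare_y: "m1 - i + b \<le> m2"
begin

definition pairs :: nat where
  "pairs = i div 2"

text \<open>The vertices \<open>Inr (b + 1 + k)\<close>, \<open>k < m1 - i\<close>, are taken by the double stars used
  alongside the pair trees; \<open>y_slot\<close> enumerates the remaining vertices of Y, terminals first.\<close>

definition y_slot :: "nat \<Rightarrow> nat" where
  "y_slot q = (if q < b then q + 1 else q + 1 + (m1 - i))"

definition yu :: "nat \<Rightarrow> nat" where
  "yu j = y_slot (pairs + j)"

definition yw :: "nat \<Rightarrow> nat" where
  "yw j = y_slot j"

definition evens :: "nat set" where
  "evens = (\<lambda>l. 2 * l + 2) ` {..<pairs}"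

definition yu_nbrs :: "nat \<Rightarrow> nat set" where
  "yu_nbrs j = {1..i} - (evens - {2 * j + 2})"

definition even_nbrs :: "nat \<Rightarrow> nat set" where
  "even_nbrs j = insert (yw j) (yu ` ({..<pairs} - {j}) \<inter> {1..b})"

definition odd_nbrs :: "nat \<Rightarrow> nat set" where
  "odd_nbrs j = {1..b} - insert (yu j) (even_nbrs j)"

text \<open>The even members of the other pairs hang from
  \<open>Inr (yw j)\<close> instead of \<open>Inr (yu j)\<close>, and the Y-terminals \<open>Inr (yu l)\<close> from
  \<open>Inl (2 * j + 2)\<close> instead of \<open>Inl (2 * j + 1)\<close>; this keeps the edge sets of different
  pairs disjoint.\<close>

definition pair_tree :: "nat \<Rightarrow> (nat + nat) graph" where
  "pair_tree j = star_tree (Inr (yu j))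
     [(Inr (yu j), Inl ` yu_nbrs j), (Inl (2 * j + 1), Inr ` odd_nbrs j),
      (Inl (2 * j + 2), Inr ` even_nbrs j), (Inr (yw j), Inl ` (evens - {2 * j + 2}))]"

definition pair_tree_edges :: "nat \<Rightarrow> (nat \<times> nat) set" where
  "pair_tree_edges j = yu_nbrs j \<times> {yu j} \<union> {2 * j + 1} \<times> odd_nbrs j \<union>
     {2 * j + 2} \<times> even_nbrs j \<union> (evens - {2 * j + 2}) \<times> {yw j}"

definition pair_hubs :: "nat \<Rightarrow> (nat + nat) set" where
  "pair_hubs j = {Inr (yu j), Inl (2 * j + 1), Inl (2 * j + 2), Inr (yw j)}"

lemma two_pairs_le: "2 * pairs \<le> i"
  unfolding pairs_def by simp

lemma y_slot_eq_iff [simp]: "y_slot q = y_slot q' \<longleftrightarrow> q = q'"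
  unfolding y_slot_def by auto

lemma y_slot_terminal_iff: "y_slot q \<in> {1..b} \<longleftrightarrow> q < b"
  unfolding y_slot_def by auto

lemma y_slot_range: "1 \<le> y_slot q" "y_slot q \<le> b \<or> b + (m1 - i) < y_slot q"
  unfolding y_slot_def by auto

lemma y_slot_le: "q < 2 * pairs \<Longrightarrow> y_slot q \<le> m2"
  unfolding y_slot_def using two_pairs_le spare_y m1_le_m2 i_le_m1 by auto

lemma yu_range: "j < pairs \<Longrightarrow> yu j \<in> {1..m2}"
  unfolding yu_def using y_slot_range(1) y_slot_le by simp

lemma yw_range: "j < pairs \<Longrightarrow> yw j \<in> {1..m2}"
  unfolding yw_def using y_slot_range(1) y_slot_le by simp

lemma yu_neq_yw [simp]: "l < pairs \<Longrightarrow> yu j \<noteq> yw l" "l < pairs \<Longrightarrow> yw l \<noteq> yu j"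
  unfolding yu_def yw_def y_slot_eq_iff by simp_all

lemma even_in_evens_iff: "2 * l + 2 \<in> evens \<longleftrightarrow> l < pairs"
  unfolding evens_def by auto

lemma odd_notin_evens [simp]: "Suc (2 * j) \<notin> evens"
  unfolding evens_def by (auto, presburger)

lemma evens_subset: "evens \<subseteq> {1..i}"
  unfolding evens_def using two_pairs_le by auto

lemma fresh_pair_tree:
  assumes "j < pairs"
  shows "fresh_stars ({Inr (yu j)}, {})
     [(Inr (yu j), Inl ` yu_nbrs j), (Inl (2 * j + 1), Inr ` odd_nbrs j),
      (Inl (2 * j + 2), Inr ` even_nbrs j), (Inr (yw j), Inl ` (evens - {2 * j + 2}))]"
proof -
  have "2 * j + 1 \<in> yu_nbrs j" "2 * j + 2 \<in> yu_nbrs j"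
    using assms two_pairs_le unfolding yu_nbrs_def by auto
  moreover have "yu j \<notin> even_nbrs j" "yw j \<in> even_nbrs j"
    using assms unfolding even_nbrs_def yu_def yw_def by auto
  moreover have "finite evens" "finite (even_nbrs j)"
    unfolding evens_def even_nbrs_def by simp_all
  ultimately show ?thesis
    by (auto simp: odd_nbrs_def yu_nbrs_def)
qed

lemma is_tree_pair_tree: "j < pairs \<Longrightarrow> is_tree (pair_tree j)"
  unfolding pair_tree_def by (rule is_tree_star_tree[OF fresh_pair_tree])

lemma inner_vertex_pair_tree: "j < pairs \<Longrightarrow> inner_vertex (pair_tree j) v \<Longrightarrow> v \<in> pair_hubs j"
  unfolding pair_tree_def pair_hubs_def by (drule inner_vertex_star_tree[OF fresh_pair_tree]) auto

lemma edges_pair_tree: "edges (pair_tree j) = bip_edge ` pair_tree_edges j"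
  unfolding pair_tree_def star_tree_def edges_add_stars pair_tree_edges_def
  by (simp add: star_Inl star_Inr image_Un Un_assoc)

lemma verts_pair_tree:
  assumes "j < pairs"
  shows "verts (pair_tree j) = S \<union> pair_hubs j"
proof -
  have "verts (pair_tree j) =
      Inr ` insert (yu j) (odd_nbrs j \<union> even_nbrs j) \<union> Inl ` (yu_nbrs j \<union> (evens - {2 * j + 2}))"
    unfolding pair_tree_def star_tree_def verts_add_stars by auto
  moreover have "insert (yu j) (odd_nbrs j \<union> even_nbrs j) = {1..b} \<union> {yu j, yw j}"
    unfolding odd_nbrs_def even_nbrs_def by auto
  moreover have "yu_nbrs j \<union> (evens - {2 * j + 2}) = {1..i}"
    unfolding yu_nbrs_def using evens_subset by auto
  moreover have "2 * j + 2 \<le> i"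
    using assms two_pairs_le by simp
  ultimately show ?thesis
    unfolding pair_hubs_def by auto
qed

lemma steiner_tree_pair_tree:
  assumes j: "j < pairs"
  shows "steiner_tree G S (pair_tree j)"
proof (rule steiner_treeI)
  show "edges (pair_tree j) \<subseteq> edges G"
    using j two_pairs_le i_le_m1 b_le_m2 yu_range[OF j] yw_range[OF j] evens_subset
    unfolding edges_pair_tree edges_complete_bipartite pair_tree_edges_def
      yu_nbrs_def odd_nbrs_def even_nbrs_def
    by (intro image_mono) auto
  have "(2 * j + 1, yu j) \<in> pair_tree_edges j" "(2 * j + 2, yu j) \<in> pair_tree_edges j"
    using j two_pairs_le unfolding pair_tree_edges_def yu_nbrs_def by auto
  then have inner_yu: "inner_vertex (pair_tree j) (Inr (yu j))"
    by (intro inner_vertex_Inr[OF edges_pair_tree, where a = "2 * j + 1" and a' = "2 * j + 2"]) auto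
  have inner_yw: "inner_vertex (pair_tree j) (Inr (yw j))" if "Inr (yw j) \<notin> S"
  proof -
    have "b \<le> j"
      using that y_slot_terminal_iff[of j] unfolding yw_def by auto
    then have "0 < j"
      using b_pos by simp
    moreover have "2 \<in> evens"
      unfolding evens_def using j by (intro image_eqI[of _ _ 0]) auto
    ultimately have "(2, yw j) \<in> pair_tree_edges j" "(2 * j + 2, yw j) \<in> pair_tree_edges j"
      unfolding pair_tree_edges_def even_nbrs_def by auto
    then show ?thesis
      using \<open>0 < j\<close> by (intro inner_vertex_Inr[OF edges_pair_tree, where a = 2 and a' = "2 * j + 2"]) auto
  qed
  fix v assume "v \<in> verts (pair_tree j)" "v \<notin> S"
  then show "inner_vertex (pair_tree j) v"
    using inner_yu inner_yw j two_pairs_le unfolding verts_pair_tree[OF j] pair_hubs_def by auto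
qed (use j two_pairs_le i_le_m1 b_le_m2 yu_range yw_range in
      \<open>auto simp: is_tree_pair_tree verts_pair_tree verts_complete_bipartite pair_hubs_def\<close>)

lemma pair_tree_edges_subset:
  assumes "j < pairs"
  shows "pair_tree_edges j \<subseteq> {1..i} \<times> ({1..b} \<union> {yu j, yw j})"
  using assms two_pairs_le evens_subset
  unfolding pair_tree_edges_def yu_nbrs_def odd_nbrs_def even_nbrs_def by auto

lemma pair_tree_edges_disjoint:
  assumes "j \<noteq> l" "j < pairs" "l < pairs"
  shows "pair_tree_edges j \<inter> pair_tree_edges l = {}"
proof -
  have "yu j \<notin> odd_nbrs l" "yu l \<notin> odd_nbrs j"
    using assms unfolding odd_nbrs_def even_nbrs_def by auto
  moreover have "2 * l + 2 \<notin> yu_nbrs j" "2 * j + 2 \<notin> yu_nbrs l"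
    using assms even_in_evens_iff unfolding yu_nbrs_def by auto
  moreover have "yw l \<notin> even_nbrs j" "yw j \<notin> even_nbrs l"
    using assms unfolding even_nbrs_def yu_def yw_def by auto
  moreover have "yu j \<noteq> yu l" "yw j \<noteq> yw l"
    using assms unfolding yu_def yw_def by auto
  moreover have "2 * j + 2 \<in> evens" "2 * l + 2 \<in> evens"
    using assms even_in_evens_iff by auto
  ultimately show ?thesis
    using assms unfolding pair_tree_edges_def by auto
qed

lemma double_star_pair_tree_edges_disjoint:
  assumes "k < m1 - i" "j < pairs"
  shows "double_star_edges k \<inter> pair_tree_edges j = {}"
proof -
  have "b + 1 + k \<notin> {1..b} \<union> {yu j, yw j}"
    using assms(1) y_slot_range(2)[of "pairs + j"] y_slot_range(2)[of j]
    unfolding yu_def yw_def by auto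
  moreover have "m1 - k \<notin> {1..i}"
    using assms(1) by auto
  ultimately show ?thesis
    using pair_tree_edges_subset[OF assms(2)] unfolding double_star_edges_def by auto
qed

definition combined_tree :: "nat \<Rightarrow> (nat + nat) graph" where
  "combined_tree k = (if k < m1 - i then double_star k else pair_tree (k - (m1 - i)))"

definition combined_hubs :: "nat \<Rightarrow> (nat + nat) set" where
  "combined_hubs k =
     (if k < m1 - i then double_star_hubs k else pair_hubs (k - (m1 - i)))"

lemma combined_hubs_disjoint:
  assumes "p < q" "q < m1 - i + pairs"
  shows "combined_hubs p \<inter> combined_hubs q = {}"
proof -
  have yu_yw: "yu j \<noteq> yu l" "yw j \<noteq> yw l" "yu j \<noteq> yw l" if "j \<noteq> l" "l < pairs" for j l
    using that unfolding yu_def yw_def by auto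
  consider "q < m1 - i" | "p < m1 - i" "m1 - i \<le> q" | "m1 - i \<le> p"
    by linarith
  then show ?thesis
  proof cases
    case 1
    then show ?thesis
      using assms unfolding combined_hubs_def double_star_hubs_def by auto
  next
    case 2
    have "2 * (q - (m1 - i)) + 2 \<le> i"
      using 2 assms two_pairs_le by linarith
    moreover have "b + 1 + p \<noteq> yu (q - (m1 - i))" "b + 1 + p \<noteq> yw (q - (m1 - i))"
      using 2 y_slot_range(2)[of "pairs + (q - (m1 - i))"] y_slot_range(2)[of "q - (m1 - i)"]
      unfolding yu_def yw_def by auto
    ultimately show ?thesis
      using 2 unfolding combined_hubs_def double_star_hubs_def pair_hubs_def by auto
  next
    case 3
    then show ?thesis
      using assms yu_yw[of "p - (m1 - i)" "q - (m1 - i)"] yu_yw[of "q - (m1 - i)" "p - (m1 - i)"]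
      unfolding combined_hubs_def pair_hubs_def by auto
  qed
qed

lemma combined_tree_edges_disjoint:
  assumes "p < q" "q < m1 - i + pairs"
  shows "edges (combined_tree p) \<inter> edges (combined_tree q) = {}"
proof -
  consider "q < m1 - i" | "p < m1 - i" "m1 - i \<le> q" | "m1 - i \<le> p"
    by linarith
  then show ?thesis
  proof cases
    case 1
    then show ?thesis
      using assms double_star_edges_disjoint[of p q]
      by (simp add: combined_tree_def edges_double_star bip_edge_image_Int)
  next
    case 2
    then show ?thesis
      using assms double_star_pair_tree_edges_disjoint[of p "q - (m1 - i)"]
      by (simp add: combined_tree_def edges_double_star edges_pair_tree bip_edge_image_Int)
  next
    case 3
    then show ?thesis
      using assms pair_tree_edges_disjoint[of "p - (m1 - i)" "q - (m1 - i)"]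
      by (simp add: combined_tree_def edges_pair_tree bip_edge_image_Int)
  qed
qed

lemma compl_indep_family_combined: "compl_indep_family G S (m1 - i + pairs) combined_tree"
proof (rule compl_indep_familyI[where C = combined_hubs])
  fix k assume k: "k < m1 - i + pairs"
  show "steiner_tree G S (combined_tree k)"
    using k spare_y steiner_tree_double_star[of k] steiner_tree_pair_tree[of "k - (m1 - i)"]
    unfolding combined_tree_def by auto
  show "verts (combined_tree k) = S \<union> combined_hubs k"
    using k verts_double_star[of k] verts_pair_tree[of "k - (m1 - i)"]
    unfolding combined_tree_def combined_hubs_def by auto
  show "v \<in> combined_hubs k" if "inner_vertex (combined_tree k) v" for v
    using k that inner_vertex_double_star[of k v] inner_vertex_pair_tree[of "k - (m1 - i)" v]
    unfolding combined_tree_def combined_hubs_def by (auto split: if_splits)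
next
  fix p q assume pq: "p < q" "q < m1 - i + pairs"
  then show "combined_hubs p \<inter> combined_hubs q = {}"
    by (rule combined_hubs_disjoint)
  show "edges (combined_tree p) \<inter> edges (combined_tree q) = {}"
    using pq by (rule combined_tree_edges_disjoint)
qed

lemma kappa_star_ge_combined: "m1 - i + i div 2 \<le> kappa_star G S"
  using kappa_star_ge_family[OF compl_indep_family_combined] by (simp add: pairs_def)

end

theorem theorem3p7:
  fixes m1 m2 s i :: nat
  assumes "2 \<le> m1" and "m1 \<le> m2"
    and "max 1 (int s - int m2) \<le> int i" and "int i \<le> min (int m1) (int s - 1)"
    and "s \<ge> m2 - m1 + 3"
    and "2 * int i > int m1 + int s - int m2"
  shows "(3 * (2 * int i) \<le> 4 * (int m1 + int s - int m2) \<longrightarrow>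
            int (kappa_star (complete_bipartite m1 m2) (S_set s i)) \<ge> int m1 - int i + int i div 2)
       \<and> (4 * (int m1 + int s - int m2) < 3 * (2 * int i) \<and> 2 * int i \<le> 2 * (int m1 + int s - int m2) \<longrightarrow>
            int (kappa_star (complete_bipartite m1 m2) (S_set s i)) \<ge> int m2 - int s + int i)
       \<and> (2 * int i > 2 * (int m1 + int s - int m2) \<longrightarrow>
            int (kappa_star (complete_bipartite m1 m2) (S_set s i)) \<ge> int m1)"
proof -
  define b where "b = s - i"
  have s: "s = i + b" and "1 \<le> b" "b \<le> m2" "i \<le> m1"
    using assms(3,4) by (auto simp: b_def)
  moreover have "2 \<le> i" "m1 - i + b \<le> m2"
    using assms(2,5,6) \<open>i \<le> m1\<close> unfolding s by linarith+
  ultimately interpret bipartite_terminals_pairs m1 m2 i b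
    using assms(2) by unfold_locales
  have "S_set s i = S"
    by (simp add: S_set_def b_def)
  moreover have "int (m1 - i + i div 2) \<le> int (kappa_star G S)"
    using kappa_star_ge_combined by linarith
  moreover have "int (min m1 (m2 - b)) \<le> int (kappa_star G S)"
    using kappa_star_ge_double_stars by linarith
  ultimately show ?thesis
    using \<open>i \<le> m1\<close> \<open>b \<le> m2\<close> unfolding s by (auto simp: zdiv_int)
qed

end
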